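(* Let $\beta_1=\frac{p_1}{q_1}>1$ and $\beta_2=\frac{p_2}{q_2}>1$ with $\gcd(p_1,q_1)=\gcd(p_2,q_2)=1$, and suppose $p_1=k_1q_2$ and $p_2=k_2q_1$ for some $k_1,k_2\in\mathbb{N}$. Write $p_1=d_1q_1+j_1$ and $p_2=d_2q_2+j_2$ with $d_i\in\mathbb{N}$ and $0\le j_1<q_1$, $0\le j_2<q_2$. Then each of the sets $O_{T_{\beta_1\circ\beta_2}}(1)$, $O_{T_{\beta_2\circ\beta_1}}(1)$, $O_{T_{\beta_1\circ\beta_2}}(\frac{j_1}{q_1})$ and $O_{T_{\beta_2\circ\beta_1}}(\frac{j_2}{q_2})$ is finite.
   Context: For a real number $\gamma>1$ let $T_\gamma:[0,1)\to[0,1)$, $T_\gamma(x)=\gamma x \bmod 1$, and for reals $\gamma_1,\gamma_2>1$ let $T_{\gamma_1\circ\gamma_2}:=T_{\gamma_1}\circ T_{\gamma_2}$. At the point $1$ the map is defined by the left limit, $T_{\gamma_1\circ\gamma_2}(1):=\lim_{x\nearrow1}T_{\gamma_1\circ\gamma_2}(x)$. For a point $x$, $O_{T}(x):=\{T^k(x):k\ge1\}$ denotes its forward orbit under $T$. *)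

theory Defs
  imports Complex_Main
begin

definition Tb :: "real \<Rightarrow> real \<Rightarrow> real" where
  "Tb g x = g * x - of_int \<lfloor>g * x\<rfloor>"

definition Tcomp :: "real \<Rightarrow> real \<Rightarrow> real \<Rightarrow> real" where
  "Tcomp g1 g2 x =
     (if x = 1 then Lim (at_left 1) (\<lambda>y. Tb g1 (Tb g2 y)) else Tb g1 (Tb g2 x))"

definition orbit :: "(real \<Rightarrow> real) \<Rightarrow> real \<Rightarrow> real set" where
  "orbit T x = {(T ^^ k) x | k. k \<ge> 1}"

end

theory Submission
  imports Defs
begin

text \<open>Let G(q) be the set of reals x with q x integral. As p2 = k2 q1, multiplication by
  \<beta>2 maps G(q1) into G(q2), and as p1 = k1 q2, multiplication by \<beta>1 maps G(q2) back into G(q1);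
  reduction mod 1 preserves both sets. The left limit of T_\<gamma> at x is \<gamma> x minus an integer too,
  so T_(\<beta>1\<circ>\<beta>2), including its value at 1, maps the finite set G(q1) \<inter> [0,1] into itself,
  and the orbits of 1 and of j1/q1, which lie in that set, are finite.\<close>

definition Tb_left_lim :: "real \<Rightarrow> real \<Rightarrow> real" where
  "Tb_left_lim g x = g * x - of_int (\<lceil>g * x\<rceil> - 1)"

lemma Tb_left_lim_bounds: "0 < Tb_left_lim g x" "Tb_left_lim g x \<le> 1"
  unfolding Tb_left_lim_def by linarith+

lemma Tb_bounds: "0 \<le> Tb g x" "Tb g x < 1"
  unfolding Tb_def by linarith+

lemma Tb_tendsto_at_left:
  assumes "g > 0"
  shows "filterlim (Tb g) (at_left (Tb_left_lim g x)) (at_left x)"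
proof -
  define n where "n = \<lceil>g * x\<rceil> - 1"
  have n: "of_int n < g * x" "g * x \<le> of_int n + 1"
    unfolding n_def by linarith+
  have "of_int n / g < x"
    using n assms by (simp add: field_simps)
  then have "eventually (\<lambda>y. y \<in> {of_int n / g<..<x}) (at_left x)"
    by (rule eventually_at_left_real)
  then have linear_near_x: "eventually (\<lambda>y. Tb g y = g * y - of_int n \<and> y < x) (at_left x)"
  proof (rule eventually_mono)
    fix y assume y: "y \<in> {of_int n / g<..<x}"
    then have "of_int n < g * y" "g * y < g * x"
      using assms by (auto simp: field_simps)
    then have "\<lfloor>g * y\<rfloor> = n"
      using n by (intro floor_unique) auto
    then show "Tb g y = g * y - of_int n \<and> y < x"
      using y by (simp add: Tb_def)
  qed
  have "((\<lambda>y. g * y - of_int n) \<longlongrightarrow> g * x - of_int n) (at_left x)"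
    by (intro tendsto_intros)
  then have "(Tb g \<longlongrightarrow> Tb_left_lim g x) (at_left x)"
    unfolding Tb_left_lim_def n_def[symmetric]
    by (rule tendsto_cong[THEN iffD1, rotated]) (use linear_near_x in \<open>auto elim: eventually_mono\<close>)
  moreover have "eventually (\<lambda>y. Tb g y < Tb_left_lim g x) (at_left x)"
    using linear_near_x by eventually_elim (use assms in \<open>simp add: Tb_left_lim_def n_def\<close>)
  ultimately show ?thesis
    by (rule tendsto_imp_filterlim_at_left)
qed

lemma Tcomp_at_1:
  assumes "g1 > 0" "g2 > 0"
  shows "Tcomp g1 g2 1 = Tb_left_lim g1 (Tb_left_lim g2 1)"
proof -
  have "filterlim (\<lambda>y. Tb g1 (Tb g2 y)) (at_left (Tb_left_lim g1 (Tb_left_lim g2 1))) (at_left 1)"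
    using Tb_tendsto_at_left[OF assms(1)] Tb_tendsto_at_left[OF assms(2)]
    by (rule filterlim_compose)
  then have "((\<lambda>y. Tb g1 (Tb g2 y)) \<longlongrightarrow> Tb_left_lim g1 (Tb_left_lim g2 1)) (at_left 1)"
    by (simp add: filterlim_at)
  then show ?thesis
    by (simp add: Tcomp_def tendsto_Lim)
qed

lemma Tcomp_bounds:
  assumes "g1 > 0" "g2 > 0"
  shows "Tcomp g1 g2 x \<in> {0..1}"
  using Tb_bounds Tb_left_lim_bounds Tcomp_at_1[OF assms]
  by (cases "x = 1") (auto simp: Tcomp_def less_imp_le)

definition grid :: "nat \<Rightarrow> real set" where
  "grid q = {x. x * real q \<in> \<int>}"

lemma one_in_grid: "1 \<in> grid q"
  by (simp add: grid_def)

lemma divide_in_grid: "real j / real q \<in> grid q"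
  by (cases "q = 0") (simp_all add: grid_def)

lemma diff_int_in_grid: "x \<in> grid q \<Longrightarrow> x - of_int n \<in> grid q"
  by (simp add: grid_def left_diff_distrib)

lemma mult_in_grid:
  assumes "p = k * q'" and "x \<in> grid q'"
  shows "real p / real q * x \<in> grid q"
proof (cases "q = 0")
  case False
  have "real p / real q * x * real q = of_nat k * (x * real q')"
    using False assms(1) by simp
  then show ?thesis
    using assms(2) by (simp add: grid_def)
qed (simp add: grid_def)

lemma Tb_in_grid: "g * x \<in> grid q \<Longrightarrow> Tb g x \<in> grid q"
  unfolding Tb_def by (rule diff_int_in_grid)

lemma Tb_left_lim_in_grid: "g * x \<in> grid q \<Longrightarrow> Tb_left_lim g x \<in> grid q"
  unfolding Tb_left_lim_def by (rule diff_int_in_grid)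

lemma finite_grid_Icc:
  assumes "q > 0"
  shows "finite (grid q \<inter> {0..1})"
proof -
  have "grid q \<inter> {0..1} \<subseteq> (\<lambda>b. of_int b / real q) ` {0..int q}"
  proof
    fix x assume x: "x \<in> grid q \<inter> {0..1}"
    then obtain b where b: "x * real q = of_int b"
      by (auto simp: grid_def elim: Ints_cases)
    have "0 \<le> x * real q" "x * real q \<le> real q"
      using x by (auto simp: mult_left_le_one_le)
    then have "b \<in> {0..int q}"
      using b by simp
    moreover have "x = of_int b / real q"
      using b assms by (simp add: field_simps)
    ultimately show "x \<in> (\<lambda>b. of_int b / real q) ` {0..int q}"
      by blast
  qed
  then show ?thesis
    by (rule finite_subset) simp
qed

lemma Tcomp_maps_grid:
  assumes "g1 > 0" "g2 > 0"
    and maps12: "\<And>x. x \<in> grid q1 \<Longrightarrow> g2 * x \<in> grid q2"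
    and maps21: "\<And>x. x \<in> grid q2 \<Longrightarrow> g1 * x \<in> grid q1"
    and "x \<in> grid q1"
  shows "Tcomp g1 g2 x \<in> grid q1"
proof (cases "x = 1")
  case True
  then show ?thesis
    using Tb_left_lim_in_grid[OF maps21[OF Tb_left_lim_in_grid[OF maps12[OF one_in_grid]]]]
    by (simp add: Tcomp_at_1[OF assms(1,2)])
next
  case False
  then show ?thesis
    using Tb_in_grid[OF maps21[OF Tb_in_grid[OF maps12[OF assms(5)]]]]
    by (simp add: Tcomp_def)
qed

lemma finite_orbit_of_invariant:
  assumes "\<And>x. x \<in> S \<Longrightarrow> T x \<in> S" "finite S" "x \<in> S"
  shows "finite (orbit T x)"
proof -
  have "(T ^^ k) x \<in> S" for k
    by (induction k) (use assms in auto)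
  then have "orbit T x \<subseteq> S"
    unfolding orbit_def by auto
  then show ?thesis
    using assms(2) by (rule finite_subset)
qed

lemma finite_orbit_Tcomp_grid:
  assumes "q1 > 0" "q2 > 0" "p1 > 0" "p2 > 0"
    and "p1 = k1 * q2" "p2 = k2 * q1"
    and "x \<in> grid q1" "x \<in> {0..1}"
  shows "finite (orbit (Tcomp (real p1 / real q1) (real p2 / real q2)) x)"
proof (rule finite_orbit_of_invariant[OF _ finite_grid_Icc[OF \<open>q1 > 0\<close>]])
  fix y assume "y \<in> grid q1 \<inter> {0..1}"
  moreover have "real p1 / real q1 > 0" "real p2 / real q2 > 0"
    using assms(1-4) by simp_all
  ultimately show "Tcomp (real p1 / real q1) (real p2 / real q2) y \<in> grid q1 \<inter> {0..1}"
    using Tcomp_maps_grid Tcomp_bounds mult_in_grid[OF assms(5)] mult_in_grid[OF assms(6)]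
    by blast
qed (use assms(7,8) in simp)

theorem lemma4p2:
  fixes p1 q1 p2 q2 k1 k2 d1 d2 j1 j2 :: nat
  assumes "q1 > 0" and "q2 > 0"
    and "real p1 / real q1 > 1" and "real p2 / real q2 > 1"
    and "coprime p1 q1" and "coprime p2 q2"
    and "p1 = k1 * q2" and "p2 = k2 * q1"
    and "p1 = d1 * q1 + j1" and "j1 < q1"
    and "p2 = d2 * q2 + j2" and "j2 < q2"
  shows "finite (orbit (Tcomp (real p1 / real q1) (real p2 / real q2)) 1)
       \<and> finite (orbit (Tcomp (real p2 / real q2) (real p1 / real q1)) 1)
       \<and> finite (orbit (Tcomp (real p1 / real q1) (real p2 / real q2)) (real j1 / real q1))
       \<and> finite (orbit (Tcomp (real p2 / real q2) (real p1 / real q1)) (real j2 / real q2))"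
proof -
  have "p1 > 0" "p2 > 0"
    using assms(3,4) by (auto intro: Nat.gr0I)
  moreover have "real j1 / real q1 \<in> {0..1}" "real j2 / real q2 \<in> {0..1}"
    using assms(10,12) by auto
  ultimately show ?thesis
    using finite_orbit_Tcomp_grid[of q1 q2 p1 p2 k1 k2] finite_orbit_Tcomp_grid[of q2 q1 p2 p1 k2 k1]
      assms(1,2,7,8) one_in_grid divide_in_grid
    by simp
qed

end
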